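(* Let $\mathcal{S}\subseteq\mathcal{L}$ and let $\mathcal{AF}_{\vdash}=(\vdash,\overline{\cdot},\mathsf{id})$ be contrapositable with $\vdash$ satisfying Cut. Then the grounded extension of $\mathcal{AF}_{\mathsf{con}}(\mathcal{S})$ equals $\mathit{Arg}_{\vdash}\left(\bigcap\mathsf{MCS}(\mathcal{AF}_{\vdash}(\mathcal{S}))\right)$.
   Context: $\mathcal{L}$ is a set of formulas; ${\vdash}\subseteq\wp_{\sf fin}(\mathcal{L})\times\mathcal{L}$ is arbitrary and $\overline{\cdot}:\mathcal{L}\to\wp(\mathcal{L})$. $\mathit{Arg}_{\vdash'}(\mathcal{S})=\{(\Gamma,\gamma):\Gamma\subseteq\mathcal{S}\text{ finite},\Gamma\vdash'\gamma\}$; in $\mathcal{AF}_{\vdash'}(\mathcal{S})$, $(\Gamma,\gamma)$ attacks $(\Gamma',\gamma')$ iff $\gamma\in\overline{\lambda}$ for some $\lambda\in\Gamma'$. The grounded extension is the $\subseteq$-minimal complete extension (complete = conflict-free, defends every member, and contains every argument it defends). $\vdash^{+\phi}$ is the transitive closure of ${\vdash}\cup\{(\emptyset,\phi)\}$; Cut: for every $\phi$ and finite $\Gamma,\Delta$, if $\Gamma\vdash\phi$ and $\Delta\vdash^{+\phi}\gamma$ then $\Gamma\cup\Delta\vdash\gamma$. Contrapositable: for all finite $\Theta$, if $\Theta\vdash\gamma'$ with $\gamma'\in\overline{\gamma}$, then for every $\sigma\in\Theta$, $(\Theta\cup\{\gamma\})\setminus\{\sigma\}\vdash\sigma'$ for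 some $\sigma'\in\overline{\sigma}$. $\Theta\subseteq\mathcal{S}$ is $\mathcal{AF}_{\vdash}(\mathcal{S})$-inconsistent iff there are $\Theta'\subseteq\Theta$ and $\gamma\in\Theta'$ with $\Theta'\setminus\{\gamma\}\vdash\gamma'$ for some $\gamma'\in\overline{\gamma}$, consistent otherwise; $\mathsf{MCS}(\mathcal{AF}_{\vdash}(\mathcal{S}))$ is the set of maximal consistent subsets of $\mathcal{S}$. $\vdash_{\mathsf{con}}=\{(\Gamma,\gamma):\Gamma\vdash\gamma,\ \Gamma\text{ consistent}\}$ and $\mathcal{AF}_{\mathsf{con}}(\mathcal{S})=\mathcal{AF}_{\vdash_{\mathsf{con}}}(\mathcal{S})$. *)

theory Defs
  imports Main
begin

text \<open>Formulas have type 'f. An entailment relation is a predicate ent :: 'f set => 'f => bool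
  (ent G g means G |- g); a contrariness operator is con :: 'f => 'f set.\<close>

type_synonym 'f ent = "'f set \<Rightarrow> 'f \<Rightarrow> bool"
type_synonym 'f arg = "'f set \<times> 'f"

definition Arg :: "'f ent \<Rightarrow> 'f set \<Rightarrow> 'f arg set" where
  "Arg ent S = {(G, g). finite G \<and> G \<subseteq> S \<and> ent G g}"

definition attacks :: "('f \<Rightarrow> 'f set) \<Rightarrow> 'f arg \<Rightarrow> 'f arg \<Rightarrow> bool" where
  "attacks con a b \<longleftrightarrow> (\<exists>l \<in> fst b. snd a \<in> con l)"

definition conflict_free :: "'a set \<Rightarrow> ('a \<Rightarrow> 'a \<Rightarrow> bool) \<Rightarrow> 'a set \<Rightarrow> bool" where
  "conflict_free Args Att E \<longleftrightarrow> (\<forall>a\<in>E. \<forall>b\<in>E. \<not> Att a b)"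

definition defends :: "'a set \<Rightarrow> ('a \<Rightarrow> 'a \<Rightarrow> bool) \<Rightarrow> 'a set \<Rightarrow> 'a \<Rightarrow> bool" where
  "defends Args Att E a \<longleftrightarrow> (\<forall>b\<in>Args. Att b a \<longrightarrow> (\<exists>c\<in>E. Att c b))"

definition complete_ext :: "'a set \<Rightarrow> ('a \<Rightarrow> 'a \<Rightarrow> bool) \<Rightarrow> 'a set \<Rightarrow> bool" where
  "complete_ext Args Att E \<longleftrightarrow>
     E \<subseteq> Args \<and> conflict_free Args Att E \<and>
     (\<forall>a\<in>E. defends Args Att E a) \<and>
     (\<forall>a\<in>Args. defends Args Att E a \<longrightarrow> a \<in> E)"

definition grounded_ext :: "'a set \<Rightarrow> ('a \<Rightarrow> 'a \<Rightarrow> bool) \<Rightarrow> 'a set \<Rightarrow> bool" where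
  "grounded_ext Args Att E \<longleftrightarrow>
     complete_ext Args Att E \<and> \<not> (\<exists>E'. complete_ext Args Att E' \<and> E' \<subset> E)"

inductive trcl_ent :: "'f ent \<Rightarrow> 'f ent" for R :: "'f ent" where
  base: "R G g \<Longrightarrow> trcl_ent R G g"
| cut: "trcl_ent R G d \<Longrightarrow> trcl_ent R D g \<Longrightarrow> d \<in> D \<Longrightarrow> trcl_ent R (G \<union> (D - {d})) g"

definition plus_ent :: "'f ent \<Rightarrow> 'f \<Rightarrow> 'f ent" where
  "plus_ent ent phi = trcl_ent (\<lambda>G g. ent G g \<or> (G = {} \<and> g = phi))"

definition satisfies_cut :: "'f ent \<Rightarrow> bool" where
  "satisfies_cut ent \<longleftrightarrow>
     (\<forall>phi G D g. finite G \<longrightarrow> finite D \<longrightarrow> ent G phi \<longrightarrow> plus_ent ent phi D g \<longrightarrow> ent (G \<union> D) g)"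

definition contrapositable :: "'f ent \<Rightarrow> ('f \<Rightarrow> 'f set) \<Rightarrow> bool" where
  "contrapositable ent con \<longleftrightarrow>
     (\<forall>T g g'. finite T \<longrightarrow> ent T g' \<longrightarrow> g' \<in> con g \<longrightarrow>
        (\<forall>s\<in>T. \<exists>s' \<in> con s. ent ((T \<union> {g}) - {s}) s'))"

text \<open>AF_|-(S)-inconsistency (only depends on |- and the contrariness operator).\<close>
definition inconsistent :: "'f ent \<Rightarrow> ('f \<Rightarrow> 'f set) \<Rightarrow> 'f set \<Rightarrow> bool" where
  "inconsistent ent con T \<longleftrightarrow>
     (\<exists>T' \<subseteq> T. \<exists>g \<in> T'. \<exists>g' \<in> con g. ent (T' - {g}) g')"

definition consistent :: "'f ent \<Rightarrow> ('f \<Rightarrow> 'f set) \<Rightarrow> 'f set \<Rightarrow> bool" where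
  "consistent ent con T \<longleftrightarrow> \<not> inconsistent ent con T"

definition MCS :: "'f ent \<Rightarrow> ('f \<Rightarrow> 'f set) \<Rightarrow> 'f set \<Rightarrow> 'f set set" where
  "MCS ent con S = {T. T \<subseteq> S \<and> consistent ent con T \<and>
                       (\<forall>T'. T \<subset> T' \<and> T' \<subseteq> S \<longrightarrow> \<not> consistent ent con T')}"

definition ent_con :: "'f ent \<Rightarrow> ('f \<Rightarrow> 'f set) \<Rightarrow> 'f ent" where
  "ent_con ent con G g \<longleftrightarrow> ent G g \<and> consistent ent con G"

end

theory Submission
  imports Defs
begin

text \<open>The arguments of the intersection of all maximal consistent subsets are exactly the
  arguments that no consistent argument attacks: an attack on one of them would, by
  contraposition, make every maximal consistent extension of the attacker's premises
  inconsistent. Conversely, if a premise l of a defended argument is missing from some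
  maximal consistent set M, contraposition yields an argument with premises in M concluding
  a contrary of l; it attacks the defended argument, and any counterattack from the
  intersection again makes M inconsistent. Hence that set of arguments is unattacked and
  contains everything it defends, which forces it to be the grounded extension.\<close>

lemma inconsistent_mono:
  "inconsistent ent con A \<Longrightarrow> A \<subseteq> B \<Longrightarrow> inconsistent ent con B"
  unfolding inconsistent_def by blast

lemma consistent_subset:
  "consistent ent con B \<Longrightarrow> A \<subseteq> B \<Longrightarrow> consistent ent con A"
  using inconsistent_mono unfolding consistent_def by blast

lemma consistent_empty: "consistent ent con {}"
  unfolding consistent_def inconsistent_def by blast

lemma MCS_subset: "M \<in> MCS ent con S \<Longrightarrow> M \<subseteq> S"
  and MCS_consistent: "M \<in> MCS ent con S \<Longrightarrow> consistent ent con M"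
  unfolding MCS_def by blast+

lemma MCS_insert_inconsistent:
  "M \<in> MCS ent con S \<Longrightarrow> l \<in> S \<Longrightarrow> l \<notin> M \<Longrightarrow> inconsistent ent con (insert l M)"
  unfolding MCS_def consistent_def by blast

lemma attack_imp_inconsistent:
  assumes contra: "contrapositable ent con"
    and "finite H" "ent H h" "h \<in> con l"
  shows "inconsistent ent con (insert l H)"
proof (cases "l \<in> H")
  case False
  then have "ent (insert l H - {l}) h" using assms(3) by simp
  with assms(4) show ?thesis unfolding inconsistent_def by blast
next
  case True
  from contra[unfolded contrapositable_def, rule_format, OF assms(2-4) True]
  obtain s' where "s' \<in> con l" "ent (H - {l}) s'" by auto
  with True have "inconsistent ent con H" unfolding inconsistent_def by blast
  then show ?thesis by (rule inconsistent_mono) blast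
qed

context
  fixes ent :: "'f ent" and con :: "'f \<Rightarrow> 'f set"
  assumes finite_premises: "\<And>G g. ent G g \<Longrightarrow> finite G"
begin

lemma inconsistent_finite_subset:
  assumes "inconsistent ent con A"
  obtains T where "finite T" "T \<subseteq> A" "inconsistent ent con T"
proof -
  from assms obtain T g g' where "T \<subseteq> A" "g \<in> T" "g' \<in> con g" "ent (T - {g}) g'"
    unfolding inconsistent_def by blast
  moreover from finite_premises[OF \<open>ent (T - {g}) g'\<close>] have "finite T" by simp
  ultimately show thesis using that unfolding inconsistent_def by blast
qed

lemma consistent_extends_to_MCS:
  assumes "H \<subseteq> S" "consistent ent con H"
  obtains M where "M \<in> MCS ent con S" "H \<subseteq> M"
proof -
  define A where "A = {T. H \<subseteq> T \<and> T \<subseteq> S \<and> consistent ent con T}"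
  have "\<Union>C \<in> A" if ne: "C \<noteq> {}" and chain: "subset.chain A C" for C
  proof -
    have CA: "C \<subseteq> A" using chain unfolding subset.chain_def by blast
    have "consistent ent con (\<Union>C)"
    proof (rule ccontr)
      assume "\<not> consistent ent con (\<Union>C)"
      then obtain T where T: "finite T" "T \<subseteq> \<Union>C" "inconsistent ent con T"
        using inconsistent_finite_subset unfolding consistent_def by metis
      then obtain B where "B \<in> C" "T \<subseteq> B"
        using finite_subset_Union_chain[OF T(1,2) ne chain] by metis
      with T(3) CA show False
        using inconsistent_mono unfolding A_def consistent_def by blast
    qed
    with ne CA show ?thesis unfolding A_def by blast
  qed
  moreover have "H \<in> A" using assms unfolding A_def by simp
  ultimately obtain M where M: "M \<in> A" "\<And>X. X \<in> A \<Longrightarrow> M \<subseteq> X \<Longrightarrow> X = M"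
    using subset_Zorn_nonempty[of A] by blast
  then have "M \<in> MCS ent con S" unfolding A_def MCS_def by blast
  with M(1) show thesis using that unfolding A_def by blast
qed

lemma MCS_nonempty: "MCS ent con S \<noteq> {}"
proof -
  obtain M where "M \<in> MCS ent con S"
    using consistent_extends_to_MCS[OF empty_subsetI consistent_empty] .
  then show ?thesis by blast
qed

lemma Arg_Inter_MCS_subset: "Arg ent (\<Inter> (MCS ent con S)) \<subseteq> Arg (ent_con ent con) S"
proof
  fix a assume "a \<in> Arg ent (\<Inter> (MCS ent con S))"
  then obtain G g where a: "a = (G, g)" "finite G" "G \<subseteq> \<Inter> (MCS ent con S)" "ent G g"
    unfolding Arg_def by auto
  obtain M where M: "M \<in> MCS ent con S" using MCS_nonempty by blast
  with a(3) have "G \<subseteq> M" by blast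
  then have "G \<subseteq> S" "consistent ent con G"
    using MCS_subset[OF M] consistent_subset[OF MCS_consistent[OF M]] by auto
  with a show "a \<in> Arg (ent_con ent con) S" unfolding Arg_def ent_con_def by auto
qed

context
  assumes contra: "contrapositable ent con"
begin

lemma MCS_entails_contrary_of_missing:
  assumes M: "M \<in> MCS ent con S" and "l \<in> S" "l \<notin> M"
  obtains K l' where "finite K" "K \<subseteq> M" "l' \<in> con l" "ent K l'"
proof -
  from MCS_insert_inconsistent[OF assms]
  obtain T g g' where T: "T \<subseteq> insert l M" "g \<in> T" "g' \<in> con g" "ent (T - {g}) g'"
    unfolding inconsistent_def by blast
  have "l \<in> T"
  proof (rule ccontr)
    assume "l \<notin> T"
    with T have "inconsistent ent con M" unfolding inconsistent_def by blast
    with MCS_consistent[OF M] show False unfolding consistent_def by blast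
  qed
  have "finite T" using finite_premises[OF T(4)] by simp
  \<comment> \<open>contraposition moves the blame from g to l\<close>
  obtain l' where "l' \<in> con l" "ent (T - {l}) l'"
  proof (cases "g = l")
    case False
    have "finite (T - {g})" using \<open>finite T\<close> by simp
    from contra[unfolded contrapositable_def, rule_format, OF this T(4,3)] False \<open>l \<in> T\<close>
    obtain s' where "s' \<in> con l" "ent ((T - {g} \<union> {g}) - {l}) s'" by blast
    moreover have "(T - {g} \<union> {g}) - {l} = T - {l}" using T(2) by blast
    ultimately show thesis using that by simp
  qed (use T that in blast)
  moreover have "finite (T - {l})" "T - {l} \<subseteq> M" using \<open>finite T\<close> T(1) by auto
  ultimately show thesis using that by blast
qed

lemma Arg_Inter_MCS_unattacked:
  assumes "a \<in> Arg ent (\<Inter> (MCS ent con S))" "b \<in> Arg (ent_con ent con) S"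
  shows "\<not> attacks con b a"
proof
  assume "attacks con b a"
  obtain H h where b: "b = (H, h)" "finite H" "H \<subseteq> S" "ent H h" "consistent ent con H"
    using assms(2) unfolding Arg_def ent_con_def by auto
  with \<open>attacks con b a\<close> assms(1) obtain l where
    l: "l \<in> \<Inter> (MCS ent con S)" "h \<in> con l"
    unfolding attacks_def Arg_def by auto
  obtain M where M: "M \<in> MCS ent con S" "H \<subseteq> M"
    using consistent_extends_to_MCS[OF b(3,5)] .
  with l(1) have "insert l H \<subseteq> M" by blast
  with attack_imp_inconsistent[OF contra b(2,4) l(2)] have "inconsistent ent con M"
    by (rule inconsistent_mono)
  with MCS_consistent[OF M(1)] show False unfolding consistent_def by simp
qed

lemma defended_Arg_in_Arg_Inter_MCS:
  assumes a: "a \<in> Arg (ent_con ent con) S"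
    and defended: "defends (Arg (ent_con ent con) S) (attacks con) (Arg ent (\<Inter> (MCS ent con S))) a"
  shows "a \<in> Arg ent (\<Inter> (MCS ent con S))"
proof -
  obtain G g where a': "a = (G, g)" "finite G" "G \<subseteq> S" "ent G g"
    using a unfolding Arg_def ent_con_def by auto
  have "l \<in> M" if M: "M \<in> MCS ent con S" and "l \<in> G" for M l
  proof (rule ccontr)
    assume "l \<notin> M"
    have "l \<in> S" using \<open>l \<in> G\<close> a'(3) by blast
    obtain K l' where K: "finite K" "K \<subseteq> M" "l' \<in> con l" "ent K l'"
      using MCS_entails_contrary_of_missing[OF M \<open>l \<in> S\<close> \<open>l \<notin> M\<close>] .
    have "K \<subseteq> S" "consistent ent con K"
      using K(2) MCS_subset[OF M] consistent_subset[OF MCS_consistent[OF M]] by blast+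
    with K have "(K, l') \<in> Arg (ent_con ent con) S" unfolding Arg_def ent_con_def by blast
    moreover have "attacks con (K, l') a"
      using a'(1) K(3) \<open>l \<in> G\<close> unfolding attacks_def by auto
    ultimately obtain c where c: "c \<in> Arg ent (\<Inter> (MCS ent con S))" "attacks con c (K, l')"
      using defended unfolding defends_def by blast
    obtain C c0 where C: "c = (C, c0)" "finite C" "C \<subseteq> \<Inter> (MCS ent con S)" "ent C c0"
      using c(1) unfolding Arg_def by auto
    obtain k where "k \<in> K" "c0 \<in> con k" using c(2) C(1) unfolding attacks_def by auto
    have "inconsistent ent con (insert k C)"
      using attack_imp_inconsistent[OF contra C(2,4) \<open>c0 \<in> con k\<close>] .
    moreover have "insert k C \<subseteq> M" using C(3) \<open>k \<in> K\<close> K(2) M by blast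
    ultimately have "inconsistent ent con M" by (rule inconsistent_mono)
    with MCS_consistent[OF M] show False unfolding consistent_def by simp
  qed
  with a' show ?thesis unfolding Arg_def by blast
qed

end

end

lemma grounded_ext_if_unattacked_and_closed:
  assumes "E \<subseteq> Args"
    and unattacked: "\<And>a b. a \<in> E \<Longrightarrow> b \<in> Args \<Longrightarrow> \<not> Att b a"
    and closed: "\<And>a. a \<in> Args \<Longrightarrow> defends Args Att E a \<Longrightarrow> a \<in> E"
  shows "grounded_ext Args Att E"
proof -
  have defended: "defends Args Att E' a" if "a \<in> E" for E' a
    using unattacked[OF that] unfolding defends_def by blast
  have "complete_ext Args Att E"
    unfolding complete_ext_def conflict_free_def using assms defended by blast
  moreover have "E \<subseteq> E'" if "complete_ext Args Att E'" for E'
    using that defended assms(1) unfolding complete_ext_def by blast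
  ultimately show ?thesis unfolding grounded_ext_def by blast
qed

theorem lemma12:
  fixes ent :: "'f set \<Rightarrow> 'f \<Rightarrow> bool" and con :: "'f \<Rightarrow> 'f set" and S :: "'f set"
  assumes fin: "\<And>G g. ent G g \<Longrightarrow> finite G"
    and contra: "contrapositable ent con"
    and cut: "satisfies_cut ent"
  shows "grounded_ext (Arg (ent_con ent con) S) (attacks con)
           (Arg ent (\<Inter> (MCS ent con S)))"
  using Arg_Inter_MCS_subset[OF fin] Arg_Inter_MCS_unattacked[OF fin contra]
    defended_Arg_in_Arg_Inter_MCS[OF fin contra]
  by (rule grounded_ext_if_unattacked_and_closed)

end
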